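(* Let $2\leq\alpha,\beta\leq\omega$. Then there is a recursive set $\Theta$ of first-order sentences in the signature of posets (one binary relation $\leq$) such that for every countable poset $P$, $P\models\Theta$ if and only if $P$ is $(\alpha,\beta)$-representable.
   Context: The result is asserted to hold in ZF, without any form of the Axiom of Choice. A poset $P$ is $(\alpha,\beta)$-representable if there is a set $X$ and an order embedding $h:P\to\wp(X)$ ($\wp(X)$ ordered by inclusion) such that whenever $S\subseteq P$ with $|S|<\alpha$ and $\bigwedge S$ exists in $P$ then $h(\bigwedge S)=\bigcap h[S]$ (with $\bigcap\emptyset=X$), and whenever $T\subseteq P$ with $|T|<\beta$ and $\bigvee T$ exists in $P$ then $h(\bigvee T)=\bigcup h[T]$. *)

theory Defs
  imports Main "HOL-Library.Nat_Bijection" "HOL-Library.Extended_Nat"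
begin

datatype fm =
    FLe nat nat
  | FEq nat nat
  | FFalse
  | FImp fm fm
  | FAll nat fm

fun freevars :: "fm \<Rightarrow> nat set" where
  "freevars (FLe i j) = {i, j}"
| "freevars (FEq i j) = {i, j}"
| "freevars FFalse = {}"
| "freevars (FImp a b) = freevars a \<union> freevars b"
| "freevars (FAll i a) = freevars a - {i}"

definition sentence :: "fm \<Rightarrow> bool" where
  "sentence \<phi> \<longleftrightarrow> freevars \<phi> = {}"

fun sat :: "'a set \<Rightarrow> ('a \<Rightarrow> 'a \<Rightarrow> bool) \<Rightarrow> (nat \<Rightarrow> 'a) \<Rightarrow> fm \<Rightarrow> bool" where
  "sat A le e (FLe i j) = le (e i) (e j)"
| "sat A le e (FEq i j) = (e i = e j)"
| "sat A le e FFalse = False"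
| "sat A le e (FImp a b) = (sat A le e a \<longrightarrow> sat A le e b)"
| "sat A le e (FAll i a) = (\<forall>x\<in>A. sat A le (e(i := x)) a)"

definition models :: "'a set \<Rightarrow> ('a \<Rightarrow> 'a \<Rightarrow> bool) \<Rightarrow> fm set \<Rightarrow> bool" where
  "models A le \<Theta> \<longleftrightarrow> (\<forall>\<phi>\<in>\<Theta>. \<forall>e. (\<forall>i. e i \<in> A) \<longrightarrow> sat A le e \<phi>)"

fun enc :: "fm \<Rightarrow> nat" where
  "enc (FLe i j) = prod_encode (0, prod_encode (i, j))"
| "enc (FEq i j) = prod_encode (1, prod_encode (i, j))"
| "enc FFalse = prod_encode (2, 0)"
| "enc (FImp a b) = prod_encode (3, prod_encode (enc a, enc b))"
| "enc (FAll i a) = prod_encode (4, prod_encode (i, enc a))"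

inductive recfn :: "nat \<Rightarrow> (nat list \<Rightarrow> nat) \<Rightarrow> bool" where
  rzero: "recfn n (\<lambda>_. 0)"
| rsucc: "recfn 1 (\<lambda>xs. Suc (hd xs))"
| rproj: "i < n \<Longrightarrow> recfn n (\<lambda>xs. xs ! i)"
| rcomp: "\<lbrakk> recfn m f; length gs = m; \<forall>g\<in>set gs. recfn n g \<rbrakk>
          \<Longrightarrow> recfn n (\<lambda>xs. f (map (\<lambda>g. g xs) gs))"
| rprim: "\<lbrakk> recfn n f; recfn (Suc (Suc n)) g \<rbrakk>
          \<Longrightarrow> recfn (Suc n) (\<lambda>xs. rec_nat (f (tl xs)) (\<lambda>k r. g (k # r # tl xs)) (hd xs))"
| rmin: "\<lbrakk> recfn (Suc n) g; \<forall>xs. length xs = n \<longrightarrow> (\<exists>y. g (y # xs) = 0) \<rbrakk>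
          \<Longrightarrow> recfn n (\<lambda>xs. LEAST y. g (y # xs) = 0)"

definition recursive_set :: "nat set \<Rightarrow> bool" where
  "recursive_set S \<longleftrightarrow> (\<exists>f. recfn 1 f \<and> (\<forall>x. x \<in> S \<longleftrightarrow> f [x] = 0))"

definition recursive_fmset :: "fm set \<Rightarrow> bool" where
  "recursive_fmset \<Theta> \<longleftrightarrow> recursive_set (enc ` \<Theta>)"

definition poset_on :: "'a set \<Rightarrow> ('a \<Rightarrow> 'a \<Rightarrow> bool) \<Rightarrow> bool" where
  "poset_on A le \<longleftrightarrow> (\<forall>x\<in>A. le x x) \<and>
     (\<forall>x\<in>A. \<forall>y\<in>A. le x y \<and> le y x \<longrightarrow> x = y) \<and>
     (\<forall>x\<in>A. \<forall>y\<in>A. \<forall>z\<in>A. le x y \<and> le y z \<longrightarrow> le x z)"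

text \<open>|S| < \<kappa> for \<kappa> \<in> {2,3,...} \<union> {\<omega>}, with \<omega> represented by \<infinity>.\<close>
definition card_less :: "'a set \<Rightarrow> enat \<Rightarrow> bool" where
  "card_less S \<kappa> \<longleftrightarrow> finite S \<and> enat (card S) < \<kappa>"

definition is_meet :: "'a set \<Rightarrow> ('a \<Rightarrow> 'a \<Rightarrow> bool) \<Rightarrow> 'a set \<Rightarrow> 'a \<Rightarrow> bool" where
  "is_meet A le S m \<longleftrightarrow> m \<in> A \<and> (\<forall>s\<in>S. le m s) \<and> (\<forall>x\<in>A. (\<forall>s\<in>S. le x s) \<longrightarrow> le x m)"

definition is_join :: "'a set \<Rightarrow> ('a \<Rightarrow> 'a \<Rightarrow> bool) \<Rightarrow> 'a set \<Rightarrow> 'a \<Rightarrow> bool" where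
  "is_join A le S m \<longleftrightarrow> m \<in> A \<and> (\<forall>s\<in>S. le s m) \<and> (\<forall>x\<in>A. (\<forall>s\<in>S. le s x) \<longrightarrow> le m x)"

definition representation :: "enat \<Rightarrow> enat \<Rightarrow> 'a set \<Rightarrow> ('a \<Rightarrow> 'a \<Rightarrow> bool) \<Rightarrow> 'x set \<Rightarrow> ('a \<Rightarrow> 'x set) \<Rightarrow> bool" where
  "representation \<alpha> \<beta> A le X h \<longleftrightarrow>
     (\<forall>p\<in>A. h p \<subseteq> X) \<and>
     (\<forall>p\<in>A. \<forall>q\<in>A. le p q \<longleftrightarrow> h p \<subseteq> h q) \<and>
     (\<forall>S m. S \<subseteq> A \<and> card_less S \<alpha> \<and> is_meet A le S m \<longrightarrow> h m = X \<inter> (\<Inter>s\<in>S. h s)) \<and>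
     (\<forall>T m. T \<subseteq> A \<and> card_less T \<beta> \<and> is_join A le T m \<longrightarrow> h m = (\<Union>t\<in>T. h t))"

text \<open>Points of X may w.l.o.g. be taken to be subsets of the carrier (identify a point with
  the set of poset elements whose image contains it); hence X :: 'a set set.\<close>
definition representable :: "enat \<Rightarrow> enat \<Rightarrow> 'a set \<Rightarrow> ('a \<Rightarrow> 'a \<Rightarrow> bool) \<Rightarrow> bool" where
  "representable \<alpha> \<beta> A le \<longleftrightarrow> (\<exists>(X :: 'a set set) h. representation \<alpha> \<beta> A le X h)"

end

theory Submission
  imports Defs
begin

text \<open>A poset is \<open>(\<alpha>, \<beta>)\<close>-representable iff any \<open>p\<close>, \<open>q\<close> with \<open>\<not> p \<le> q\<close> are separated by
  a prime filter: an up-set closed under the existing meets of fewer than \<open>\<alpha>\<close> elements which,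
  whenever it contains an existing join of fewer than \<open>\<beta>\<close> elements, contains one of them.  If
  the poset is countable, list its elements; then \<open>p\<close> and \<open>q\<close> are so separated iff every finite
  tuple \<open>p, q, x\<^sub>0, \<dots>, x\<^sub>n\<close> has a colouring that looks like the trace of such a filter from
  inside the tuple: restricting a filter gives one direction, Koenig's lemma on the finitely
  branching tree of these colourings the other.  For each length, the statement that every tuple
  with \<open>\<not> v\<^sub>0 \<le> v\<^sub>1\<close> has a good colouring is a single first-order sentence, a disjunction
  over the \<open>2\<^sup>N\<close> colourings.  The Goedel number of the \<open>n\<close>-th sentence is a primitive
  recursive function of \<open>n\<close> that is at least \<open>n\<close>, so the set of sentences is decidable by a
  bounded search.\<close>


section \<open>Computable functions\<close>

text \<open>\<^const>\<open>recfn\<close> constrains the term \<open>f\<close> itself; \<open>computable n F\<close> only asks \<open>F\<close> to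
  agree with such a term on argument lists of length \<open>n\<close>.\<close>

named_theorems computable_intros

definition computable :: "nat \<Rightarrow> (nat list \<Rightarrow> nat) \<Rightarrow> bool" where
  "computable n F \<longleftrightarrow> (\<exists>f. recfn n f \<and> (\<forall>xs. length xs = n \<longrightarrow> f xs = F xs))"

lemma computable_cong:
  "computable n F \<Longrightarrow> (\<And>xs. length xs = n \<Longrightarrow> F xs = G xs) \<Longrightarrow> computable n G"
  unfolding computable_def by metis

lemma recfn_computable: "recfn n f \<Longrightarrow> computable n f"
  unfolding computable_def by blast

lemma computable_nth [computable_intros]: "i < n \<Longrightarrow> computable n (\<lambda>xs. xs ! i)"
  by (rule recfn_computable, rule rproj)

lemma computable_list_recfn:
  assumes "\<forall>G\<in>set Gs. computable n G"
  shows "\<exists>gs. length gs = length Gs \<and> (\<forall>g\<in>set gs. recfn n g) \<and>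
     (\<forall>xs. length xs = n \<longrightarrow> map (\<lambda>g. g xs) gs = map (\<lambda>G. G xs) Gs)"
  using assms
proof (induction Gs)
  case Nil
  then show ?case by auto
next
  case (Cons G Gs)
  then obtain gs where gs: "length gs = length Gs" "\<forall>g\<in>set gs. recfn n g"
     "\<forall>xs. length xs = n \<longrightarrow> map (\<lambda>g. g xs) gs = map (\<lambda>G. G xs) Gs" by auto
  from Cons.prems obtain g where g: "recfn n g" "\<forall>xs. length xs = n \<longrightarrow> g xs = G xs"
    unfolding computable_def by auto
  show ?case by (rule exI[of _ "g # gs"]) (use gs g in auto)
qed

lemma computable_comp:
  assumes "computable m F" "length Gs = m" "\<forall>G\<in>set Gs. computable n G"
  shows "computable n (\<lambda>xs. F (map (\<lambda>G. G xs) Gs))"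
proof -
  obtain f where f: "recfn m f" "\<forall>xs. length xs = m \<longrightarrow> f xs = F xs"
    using assms(1) unfolding computable_def by auto
  obtain gs where gs: "length gs = length Gs" "\<forall>g\<in>set gs. recfn n g"
     "\<forall>xs. length xs = n \<longrightarrow> map (\<lambda>g. g xs) gs = map (\<lambda>G. G xs) Gs"
    using computable_list_recfn[OF assms(3)] by auto
  have "recfn n (\<lambda>xs. f (map (\<lambda>g. g xs) gs))"
    using f gs assms(2) by (intro rcomp) auto
  moreover have "\<forall>xs. length xs = n \<longrightarrow> f (map (\<lambda>g. g xs) gs) = F (map (\<lambda>G. G xs) Gs)"
    using f gs assms(2) by auto
  ultimately show ?thesis unfolding computable_def by blast
qed

lemma computable_compose1:
  "computable 1 (\<lambda>xs. f (xs!0)) \<Longrightarrow> computable n g \<Longrightarrow> computable n (\<lambda>xs. f (g xs))"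
  using computable_comp[of 1 "\<lambda>xs. f (xs!0)" "[g]" n] by simp

lemma computable_compose2:
  "computable 2 (\<lambda>xs. f (xs!0) (xs!1)) \<Longrightarrow> computable n g \<Longrightarrow> computable n h \<Longrightarrow>
   computable n (\<lambda>xs. f (g xs) (h xs))"
  using computable_comp[of 2 "\<lambda>xs. f (xs!0) (xs!1)" "[g, h]" n] by simp

lemma computable_compose3:
  "computable 3 (\<lambda>xs. f (xs!0) (xs!1) (xs!2)) \<Longrightarrow> computable n g \<Longrightarrow> computable n h \<Longrightarrow>
   computable n k \<Longrightarrow> computable n (\<lambda>xs. f (g xs) (h xs) (k xs))"
  using computable_comp[of 3 "\<lambda>xs. f (xs!0) (xs!1) (xs!2)" "[g, h, k]" n] by simp

lemma computable_compose4:
  "computable 4 (\<lambda>xs. f (xs!0) (xs!1) (xs!2) (xs!3)) \<Longrightarrow> computable n g \<Longrightarrow> computable n h \<Longrightarrow>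
   computable n k \<Longrightarrow> computable n l \<Longrightarrow> computable n (\<lambda>xs. f (g xs) (h xs) (k xs) (l xs))"
  using computable_comp[of 4 "\<lambda>xs. f (xs!0) (xs!1) (xs!2) (xs!3)" "[g, h, k, l]" n] by simp

lemma computable_const [computable_intros]: "computable n (\<lambda>_. k)"
proof (induction k)
  case 0
  show ?case by (rule recfn_computable, rule rzero)
next
  case (Suc k)
  have "computable 1 (\<lambda>xs. Suc (xs!0))"
    by (rule computable_cong[OF recfn_computable[OF rsucc]]) (auto simp: length_Suc_conv)
  then show ?case using computable_compose1[of Suc n "\<lambda>_. k"] Suc by simp
qed

lemma computable_Suc [computable_intros]: "computable n g \<Longrightarrow> computable n (\<lambda>xs. Suc (g xs))"
  by (rule computable_compose1[of Suc],
      rule computable_cong[OF recfn_computable[OF rsucc]]) (auto simp: length_Suc_conv)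

lemma computable_rec_nat:
  assumes "computable n B" "computable (Suc (Suc n)) S"
  shows "computable (Suc n) (\<lambda>xs. rec_nat (B (tl xs)) (\<lambda>k r. S (k # r # tl xs)) (hd xs))"
proof -
  obtain f where f: "recfn n f" "\<forall>xs. length xs = n \<longrightarrow> f xs = B xs"
    using assms(1) unfolding computable_def by auto
  obtain g where g: "recfn (Suc (Suc n)) g" "\<forall>xs. length xs = Suc (Suc n) \<longrightarrow> g xs = S xs"
    using assms(2) unfolding computable_def by auto
  have "recfn (Suc n) (\<lambda>xs. rec_nat (f (tl xs)) (\<lambda>k r. g (k # r # tl xs)) (hd xs))"
    using f g by (intro rprim) auto
  moreover have "\<forall>xs. length xs = Suc n \<longrightarrow> rec_nat (f (tl xs)) (\<lambda>k r. g (k # r # tl xs)) (hd xs)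
     = rec_nat (B (tl xs)) (\<lambda>k r. S (k # r # tl xs)) (hd xs)"
    using f g by auto
  ultimately show ?thesis unfolding computable_def by blast
qed

lemma computable_prim_rec:
  assumes B: "computable n B"
    and St: "computable (Suc (Suc n)) (\<lambda>zs. St (zs!0) (zs!1) (drop 2 zs))"
    and K: "computable n K"
    and R0: "\<And>ys. R 0 ys = B ys" and RSuc: "\<And>k ys. R (Suc k) ys = St k (R k ys) ys"
  shows "computable n (\<lambda>xs. R (K xs) xs)"
proof -
  have "computable (Suc n) (\<lambda>xs. R (hd xs) (tl xs))"
  proof (rule computable_cong[OF computable_rec_nat[OF B St]])
    fix xs :: "nat list"
    have "rec_nat (B (tl xs)) (\<lambda>k r. St k r (tl xs)) m = R m (tl xs)" for m
      by (induction m) (auto simp: R0 RSuc)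
    then show "rec_nat (B (tl xs)) (\<lambda>k r. St ((k # r # tl xs)!0) ((k # r # tl xs)!1)
        (drop 2 (k # r # tl xs))) (hd xs) = R (hd xs) (tl xs)" by simp
  qed
  then have "computable n (\<lambda>xs. R (hd (map (\<lambda>G. G xs) (K # map (\<lambda>i xs. xs ! i) [0..<n])))
      (tl (map (\<lambda>G. G xs) (K # map (\<lambda>i xs. xs ! i) [0..<n]))))"
    by (rule computable_comp[where F = "\<lambda>ys. R (hd ys) (tl ys)"]) (auto intro: K computable_nth)
  moreover have "length xs = n \<Longrightarrow> map (\<lambda>i. xs ! i) [0..<n] = xs" for xs :: "nat list"
    by (rule nth_equalityI) auto
  ultimately show ?thesis
    by (auto elim!: computable_cong simp: comp_def)
qed

fun fold_range :: "('b \<Rightarrow> 'a \<Rightarrow> 'b) \<Rightarrow> 'b \<Rightarrow> nat \<Rightarrow> (nat \<Rightarrow> 'a) \<Rightarrow> 'b" where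
  "fold_range op b 0 F = b"
| "fold_range op b (Suc k) F = op (fold_range op b k F) (F k)"

lemma fold_range_hom:
  "(\<And>x y. h (op x y) = op' (h x) (g y)) \<Longrightarrow>
   h (fold_range op b k F) = fold_range op' (h b) k (\<lambda>i. g (F i))"
  by (induction k) simp_all

lemma sum_eq_fold_range: "(\<Sum>i<N. F i) = fold_range (+) 0 N F"
  by (induction N) auto

lemma prod_eq_fold_range: "(\<Prod>i<N. F i) = fold_range (*) 1 N F"
  by (induction N) auto

lemma computable_fold_range [computable_intros]:
  assumes op: "computable 2 (\<lambda>xs. op (xs!0) (xs!1))"
    and B: "computable n B"
    and F: "computable (Suc n) (\<lambda>ys. F (hd ys) (tl ys))"
    and K: "computable n K"
  shows "computable n (\<lambda>xs. fold_range op (B xs) (K xs) (\<lambda>k. F k xs))"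
proof (rule computable_prim_rec[where R = "\<lambda>k ys. fold_range op (B ys) k (\<lambda>j. F j ys)"
      and St = "\<lambda>k r ys. op r (F k ys)"])
  let ?Gs = "(\<lambda>zs. zs!0) # map (\<lambda>i zs. zs ! (i+2)) [0..<n]"
  have "computable (Suc (Suc n)) (\<lambda>zs. F (hd (map (\<lambda>G. G zs) ?Gs)) (tl (map (\<lambda>G. G zs) ?Gs)))"
    by (rule computable_comp[OF F]) (auto intro: computable_nth)
  moreover have "length zs = Suc (Suc n) \<Longrightarrow> map (\<lambda>i. zs ! Suc (Suc i)) [0..<n] = drop 2 zs"
    for zs :: "nat list"
    by (rule nth_equalityI) auto
  ultimately have "computable (Suc (Suc n)) (\<lambda>zs. F (zs!0) (drop 2 zs))"
    by (auto elim!: computable_cong simp: comp_def)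
  then show "computable (Suc (Suc n)) (\<lambda>zs. op (zs ! 1) (F (zs ! 0) (drop 2 zs)))"
    by (rule computable_compose2[OF op, rotated]) (auto intro: computable_nth)
qed (auto intro: B K)

lemma computable_drop2_nth [computable_intros]:
  "Suc (Suc i) < n \<Longrightarrow> computable n (\<lambda>xs. drop 2 xs ! i)"
  by (rule computable_cong[OF computable_nth[of "Suc (Suc i)" n]]) auto

text \<open>Inside nested folds the outer loop variables are reached through \<^const>\<open>hd\<close> and
  \<^const>\<open>tl\<close> of the argument list; the following cases let \<open>computable_intros\<close> see through them.\<close>

lemma computable_hd [computable_intros]: "0 < n \<Longrightarrow> computable n hd"
  by (rule computable_cong[OF computable_nth[of 0 n]])
    (auto simp: hd_conv_nth simp flip: length_greater_0_conv)

lemma computable_tl_nth [computable_intros]: "Suc i < n \<Longrightarrow> computable n (\<lambda>xs. tl xs ! i)"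
  by (rule computable_cong[OF computable_nth[of "Suc i" n]]) (auto simp: nth_tl)

lemma computable_hd_tl [computable_intros]: "1 < n \<Longrightarrow> computable n (\<lambda>xs. hd (tl xs))"
  by (rule computable_cong[OF computable_nth[of 1 n]])
    (auto simp: hd_conv_nth nth_tl simp flip: length_greater_0_conv)

lemma computable_tl_tl_nth [computable_intros]:
  "Suc (Suc i) < n \<Longrightarrow> computable n (\<lambda>xs. tl (tl xs) ! i)"
  by (rule computable_cong[OF computable_nth[of "Suc (Suc i)" n]]) (auto simp: nth_tl)

lemma computable_add [computable_intros]:
  "computable n g \<Longrightarrow> computable n h \<Longrightarrow> computable n (\<lambda>xs. g xs + h xs)"
proof (rule computable_compose2[where f = "(+)"])
  have "computable 2 (\<lambda>xs. (\<lambda>k ys. k + ys!1) (xs!0) xs)"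
    by (rule computable_prim_rec[where R = "\<lambda>k ys. k + ys!1" and K = "\<lambda>xs. xs!0"
        and B = "\<lambda>ys. ys!1" and St = "\<lambda>k r ys. Suc r"])
      (auto intro!: computable_nth computable_Suc)
  then show "computable 2 (\<lambda>xs. xs!0 + xs!1)" by simp
qed

lemma computable_mult [computable_intros]:
  "computable n g \<Longrightarrow> computable n h \<Longrightarrow> computable n (\<lambda>xs. g xs * h xs)"
proof (rule computable_compose2[where f = "(*)"])
  have "computable 2 (\<lambda>xs. (\<lambda>k ys. k * ys!1) (xs!0) xs)"
    by (rule computable_prim_rec[where R = "\<lambda>k ys. k * ys!1" and K = "\<lambda>xs. xs!0"
        and B = "\<lambda>ys. 0" and St = "\<lambda>k r ys. r + ys!1"])
      (auto intro!: computable_add computable_nth computable_drop2_nth computable_const)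
  then show "computable 2 (\<lambda>xs. xs!0 * xs!1)" by simp
qed

lemma computable_pred: "computable n g \<Longrightarrow> computable n (\<lambda>xs. g xs - 1)"
proof (rule computable_compose1[where f = "\<lambda>a. a - 1"])
  have "computable 1 (\<lambda>xs. (\<lambda>k ys. k - 1) (xs!0) xs)"
    by (rule computable_prim_rec[where R = "\<lambda>k ys. k - 1" and K = "\<lambda>xs. xs!0"
        and B = "\<lambda>ys. 0" and St = "\<lambda>k r ys. k"])
      (auto intro!: computable_nth computable_const)
  then show "computable 1 (\<lambda>xs. xs!0 - 1)" by simp
qed

lemma computable_diff [computable_intros]:
  "computable n g \<Longrightarrow> computable n h \<Longrightarrow> computable n (\<lambda>xs. g xs - h xs)"
proof (rule computable_compose2[where f = "(-)"])
  have "computable 2 (\<lambda>xs. (\<lambda>k ys. ys!0 - k) (xs!1) xs)"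
    by (rule computable_prim_rec[where R = "\<lambda>k ys. ys!0 - k" and K = "\<lambda>xs. xs!1"
        and B = "\<lambda>ys. ys!0" and St = "\<lambda>k r ys. r - 1"])
      (auto intro!: computable_nth computable_pred[of _ "\<lambda>xs. xs!1", simplified])
  then show "computable 2 (\<lambda>xs. xs!0 - xs!1)" by simp
qed

lemma computable_if_zero [computable_intros]:
  "computable n t \<Longrightarrow> computable n g \<Longrightarrow> computable n h \<Longrightarrow>
   computable n (\<lambda>xs. if t xs = 0 then g xs else h xs)"
proof (rule computable_compose3[where f = "\<lambda>t x y. if t = 0 then x else y"])
  have "computable 3 (\<lambda>xs. (\<lambda>k ys. if k = 0 then ys!1 else ys!2) (xs!0) xs)"
    by (rule computable_prim_rec[where R = "\<lambda>k ys. if k = 0 then ys!1 else ys!2" and K = "\<lambda>xs. xs!0"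
        and B = "\<lambda>ys. ys!1" and St = "\<lambda>k r ys. ys!2"])
      (auto intro!: computable_nth computable_drop2_nth)
  then show "computable 3 (\<lambda>xs. if xs!0 = 0 then xs!1 else xs!2)" by simp
qed

lemma computable_mod2: "computable n g \<Longrightarrow> computable n (\<lambda>xs. g xs mod 2)"
proof (rule computable_compose1[where f = "\<lambda>a. a mod 2"])
  have "computable 1 (\<lambda>xs. (\<lambda>k ys. k mod 2) (xs!0) xs)"
    by (rule computable_prim_rec[where R = "\<lambda>k ys. k mod 2" and K = "\<lambda>xs. xs!0"
        and B = "\<lambda>ys. 0" and St = "\<lambda>k r ys. 1 - r"])
      (auto intro!: computable_nth computable_diff computable_const simp: mod_Suc)
  then show "computable 1 (\<lambda>xs. xs!0 mod 2)" by simp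
qed

lemma computable_div2: "computable n g \<Longrightarrow> computable n (\<lambda>xs. g xs div 2)"
proof (rule computable_compose1[where f = "\<lambda>a. a div 2"])
  have div2_Suc: "Suc k div 2 = k div 2 + k mod 2" for k :: nat
    by presburger
  have "computable 1 (\<lambda>xs. (\<lambda>k ys. k div 2) (xs!0) xs)"
    by (rule computable_prim_rec[where R = "\<lambda>k ys. k div 2" and K = "\<lambda>xs. xs!0"
        and B = "\<lambda>ys. 0" and St = "\<lambda>k r ys. r + k mod 2"])
      (auto intro!: computable_nth computable_add computable_mod2 computable_const simp: div2_Suc)
  then show "computable 1 (\<lambda>xs. xs!0 div 2)" by simp
qed

lemma computable_power2 [computable_intros]: "computable n g \<Longrightarrow> computable n (\<lambda>xs. 2 ^ g xs)"
proof (rule computable_compose1[where f = "\<lambda>a. 2 ^ a"])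
  have "computable 1 (\<lambda>xs. (\<lambda>k ys. (2::nat) ^ k) (xs!0) xs)"
    by (rule computable_prim_rec[where R = "\<lambda>k ys. (2::nat) ^ k" and K = "\<lambda>xs. xs!0"
        and B = "\<lambda>ys. 1" and St = "\<lambda>k r ys. r + r"])
      (auto intro!: computable_nth computable_add computable_const)
  then show "computable 1 (\<lambda>xs. 2 ^ (xs!0))" by simp
qed

lemma computable_div_power2:
  "computable n g \<Longrightarrow> computable n h \<Longrightarrow> computable n (\<lambda>xs. g xs div 2 ^ h xs)"
proof (rule computable_compose2[where f = "\<lambda>a b. a div 2 ^ b"])
  have "computable 2 (\<lambda>xs. (\<lambda>k ys. ys!0 div 2 ^ k) (xs!1) xs)"
    by (rule computable_prim_rec[where R = "\<lambda>k ys. ys!0 div 2 ^ k" and K = "\<lambda>xs. xs!1"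
        and B = "\<lambda>ys. ys!0" and St = "\<lambda>k r ys. r div 2"])
      (auto intro!: computable_nth computable_div2, metis div_mult2_eq mult.commute)
  then show "computable 2 (\<lambda>xs. xs!0 div 2 ^ (xs!1))" by simp
qed

lemma computable_triangle: "computable n g \<Longrightarrow> computable n (\<lambda>xs. triangle (g xs))"
proof (rule computable_compose1[where f = triangle])
  have "computable 1 (\<lambda>xs. (\<lambda>k ys. triangle k) (xs!0) xs)"
    by (rule computable_prim_rec[where R = "\<lambda>k ys. triangle k" and K = "\<lambda>xs. xs!0"
        and B = "\<lambda>ys. 0" and St = "\<lambda>k r ys. r + Suc k"])
      (auto intro!: computable_nth computable_add computable_Suc computable_const)
  then show "computable 1 (\<lambda>xs. triangle (xs!0))" by simp
qed

lemma computable_prod_encode [computable_intros]: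
  "computable n g \<Longrightarrow> computable n h \<Longrightarrow> computable n (\<lambda>xs. prod_encode (g xs, h xs))"
  unfolding prod_encode_def by (auto intro!: computable_add computable_triangle)

definition digit :: "nat \<Rightarrow> nat \<Rightarrow> nat" where
  "digit c i = c div 2 ^ i mod 2"

lemma computable_digit [computable_intros]:
  "computable n g \<Longrightarrow> computable n h \<Longrightarrow> computable n (\<lambda>xs. digit (g xs) (h xs))"
  unfolding digit_def by (intro computable_mod2 computable_div_power2)

lemma digit_eq_of_bool: "digit c i = of_bool (bit c i)"
  by (simp add: digit_def bit_iff_odd odd_iff_mod_2_eq_one)

lemma bit_less_power2: "(S::nat) < 2 ^ N \<Longrightarrow> N \<le> i \<Longrightarrow> \<not> bit S i"
proof -
  assume "S < 2 ^ N" "N \<le> i"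
  then have "S < 2 ^ i"
    using power_increasing[of N i "2::nat"] by linarith
  then show ?thesis by (simp add: bit_iff_odd)
qed

lemma bit_add_power2: "(S::nat) < 2 ^ N \<Longrightarrow> bit (S + 2 ^ N) i \<longleftrightarrow> i = N \<or> bit S i"
  using bit_less_power2[of S N N] by (subst bit_disjunctive_add_iff) (auto simp: bit_exp_iff)

lemma code_of_subset: "SS \<subseteq> {..<N} \<Longrightarrow> \<exists>S::nat. S < 2 ^ N \<and> (\<forall>i<N. bit S i \<longleftrightarrow> i \<in> SS)"
proof (induction N arbitrary: SS)
  case 0
  then show ?case by auto
next
  case (Suc N)
  have "SS - {N} \<subseteq> {..<N}"
    using Suc.prems by (auto simp: less_Suc_eq)
  then obtain S :: nat where S: "S < 2 ^ N" "\<forall>i<N. bit S i \<longleftrightarrow> i \<in> SS - {N}"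
    using Suc.IH by blast
  show ?case
  proof (cases "N \<in> SS")
    case True
    then show ?thesis
      using S bit_add_power2[OF S(1)] by (intro exI[of _ "S + 2 ^ N"]) (auto simp: less_Suc_eq)
  next
    case False
    then show ?thesis
      using S bit_less_power2[OF S(1)] by (intro exI[of _ S]) (auto simp: less_Suc_eq)
  qed
qed

lemma all_codes_iff_all_subsets:
  "(\<forall>S::nat. S < 2 ^ N \<longrightarrow> P {s. s < N \<and> bit S s}) \<longleftrightarrow> (\<forall>SS\<subseteq>{..<N}. P SS)"
proof
  assume all: "\<forall>S::nat. S < 2 ^ N \<longrightarrow> P {s. s < N \<and> bit S s}"
  show "\<forall>SS\<subseteq>{..<N}. P SS"
  proof (intro allI impI)
    fix SS assume "SS \<subseteq> {..<N}"
    then obtain S :: nat where "S < 2 ^ N" "\<forall>i<N. bit S i \<longleftrightarrow> i \<in> SS"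
      using code_of_subset by blast
    moreover from this \<open>SS \<subseteq> {..<N}\<close> have "{s. s < N \<and> bit S s} = SS"
      by auto
    ultimately show "P SS"
      using all by metis
  qed
next
  assume "\<forall>SS\<subseteq>{..<N}. P SS"
  moreover have "{s. s < N \<and> bit S s} \<subseteq> {..<N}" for S :: nat
    by auto
  ultimately show "\<forall>S::nat. S < 2 ^ N \<longrightarrow> P {s. s < N \<and> bit S s}"
    by blast
qed

section \<open>Formulas\<close>

definition fTrue :: fm where "fTrue = FImp FFalse FFalse"
definition fNeg :: "fm \<Rightarrow> fm" where "fNeg a = FImp a FFalse"
definition fAnd :: "fm \<Rightarrow> fm \<Rightarrow> fm" where "fAnd a b = fNeg (FImp a (fNeg b))"
definition fOr :: "fm \<Rightarrow> fm \<Rightarrow> fm" where "fOr a b = FImp (fNeg a) b"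

abbreviation big_and :: "nat \<Rightarrow> (nat \<Rightarrow> fm) \<Rightarrow> fm" where
  "big_and k F \<equiv> fold_range fAnd fTrue k F"

abbreviation big_or :: "nat \<Rightarrow> (nat \<Rightarrow> fm) \<Rightarrow> fm" where
  "big_or k F \<equiv> fold_range fOr FFalse k F"

definition forall_below :: "nat \<Rightarrow> fm \<Rightarrow> fm" where
  "forall_below N \<psi> = fold_range (\<lambda>\<phi> i. FAll i \<phi>) \<psi> N (\<lambda>i. i)"

lemma freevars_connectives [simp]:
  "freevars fTrue = {}" "freevars (fNeg a) = freevars a"
  "freevars (fAnd a b) = freevars a \<union> freevars b" "freevars (fOr a b) = freevars a \<union> freevars b"
  by (auto simp: fTrue_def fNeg_def fAnd_def fOr_def)

lemma freevars_big_and [simp]: "freevars (big_and k F) = (\<Union>i<k. freevars (F i))"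
  by (induction k) (auto simp: lessThan_Suc)

lemma freevars_big_or [simp]: "freevars (big_or k F) = (\<Union>i<k. freevars (F i))"
  by (induction k) (auto simp: lessThan_Suc)

lemma freevars_forall_below: "freevars (forall_below N \<psi>) = freevars \<psi> - {..<N}"
  unfolding forall_below_def by (induction N) (auto simp: lessThan_Suc)

lemma sat_connectives [simp]:
  "sat A le e fTrue" "sat A le e (fNeg a) \<longleftrightarrow> \<not> sat A le e a"
  "sat A le e (fAnd a b) \<longleftrightarrow> sat A le e a \<and> sat A le e b"
  "sat A le e (fOr a b) \<longleftrightarrow> sat A le e a \<or> sat A le e b"
  by (auto simp: fTrue_def fNeg_def fAnd_def fOr_def)

lemma sat_big_and [simp]: "sat A le e (big_and k F) \<longleftrightarrow> (\<forall>i<k. sat A le e (F i))"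
  by (induction k) (auto simp: less_Suc_eq)

lemma sat_big_or [simp]: "sat A le e (big_or k F) \<longleftrightarrow> (\<exists>i<k. sat A le e (F i))"
  by (induction k) (auto simp: less_Suc_eq)

lemma sat_forall_below:
  "sat A le e (forall_below N \<psi>) \<longleftrightarrow>
     (\<forall>e'. (\<forall>i<N. e' i \<in> A) \<longrightarrow> (\<forall>i\<ge>N. e' i = e i) \<longrightarrow> sat A le e' \<psi>)"
proof (induction N arbitrary: e)
  case 0
  have "(\<forall>i. e' i = e i) \<longleftrightarrow> e' = e" for e' :: "nat \<Rightarrow> 'a" by auto
  then show ?case by (simp add: forall_below_def)
next
  case (Suc N)
  have "sat A le e (forall_below (Suc N) \<psi>) \<longleftrightarrow>
      (\<forall>x\<in>A. \<forall>e'. (\<forall>i<N. e' i \<in> A) \<longrightarrow> (\<forall>i\<ge>N. e' i = (e(N := x)) i) \<longrightarrow> sat A le e' \<psi>)"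
    using Suc.IH by (simp add: forall_below_def)
  also have "\<dots> \<longleftrightarrow> (\<forall>e'. (\<forall>i<Suc N. e' i \<in> A) \<longrightarrow> (\<forall>i\<ge>Suc N. e' i = e i) \<longrightarrow> sat A le e' \<psi>)"
  proof (intro iffI allI impI ballI)
    fix e' assume H: "\<forall>x\<in>A. \<forall>e'. (\<forall>i<N. e' i \<in> A) \<longrightarrow> (\<forall>i\<ge>N. e' i = (e(N := x)) i) \<longrightarrow> sat A le e' \<psi>"
      and A: "\<forall>i<Suc N. e' i \<in> A" and out: "\<forall>i\<ge>Suc N. e' i = e i"
    have "\<forall>i\<ge>N. e' i = (e(N := e' N)) i"
      using out by (auto simp: Suc_le_eq)
    moreover have "e' N \<in> A" "\<forall>i<N. e' i \<in> A"
      using A by simp_all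
    ultimately show "sat A le e' \<psi>"
      using H by blast
  next
    fix x e' assume H: "\<forall>e'. (\<forall>i<Suc N. e' i \<in> A) \<longrightarrow> (\<forall>i\<ge>Suc N. e' i = e i) \<longrightarrow> sat A le e' \<psi>"
      and x: "x \<in> A" and A: "\<forall>i<N. e' i \<in> A" and out: "\<forall>i\<ge>N. e' i = (e(N := x)) i"
    have "\<forall>i<Suc N. e' i \<in> A"
      using A x out by (simp add: less_Suc_eq)
    moreover have "\<forall>i\<ge>Suc N. e' i = e i"
      using out by simp
    ultimately show "sat A le e' \<psi>"
      using H by blast
  qed
  finally show ?case .
qed

definition code_neg :: "nat \<Rightarrow> nat" where
  "code_neg a = prod_encode (3, prod_encode (a, prod_encode (2, 0)))"

definition code_and :: "nat \<Rightarrow> nat \<Rightarrow> nat" where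
  "code_and a b = code_neg (prod_encode (3, prod_encode (a, code_neg b)))"

definition code_or :: "nat \<Rightarrow> nat \<Rightarrow> nat" where
  "code_or a b = prod_encode (3, prod_encode (code_neg a, b))"

lemma enc_connectives:
  "enc (fNeg a) = code_neg (enc a)"
  "enc (fAnd a b) = code_and (enc a) (enc b)"
  "enc (fOr a b) = code_or (enc a) (enc b)"
  by (simp_all add: fNeg_def fAnd_def fOr_def code_neg_def code_and_def code_or_def)

lemma enc_big_and: "enc (big_and k F) = fold_range code_and (enc fTrue) k (\<lambda>i. enc (F i))"
  by (rule fold_range_hom) (simp add: enc_connectives)

lemma enc_big_or: "enc (big_or k F) = fold_range code_or (enc FFalse) k (\<lambda>i. enc (F i))"
  by (rule fold_range_hom) (simp add: enc_connectives)

lemma enc_forall_below: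
  "enc (forall_below N \<psi>) =
     fold_range (\<lambda>r i. prod_encode (4, prod_encode (i, r))) (enc \<psi>) N (\<lambda>i. i)"
  unfolding forall_below_def by (rule fold_range_hom) simp

lemmas enc_simps =
  enc.simps enc_connectives enc_big_and enc_big_or enc_forall_below if_distrib[of enc]

lemma computable_code_neg [computable_intros]:
  "computable n g \<Longrightarrow> computable n (\<lambda>xs. code_neg (g xs))"
  unfolding code_neg_def by (intro computable_intros)

lemma computable_code_and [computable_intros]:
  "computable n g \<Longrightarrow> computable n h \<Longrightarrow> computable n (\<lambda>xs. code_and (g xs) (h xs))"
  unfolding code_and_def by (intro computable_intros)

lemma computable_code_or [computable_intros]:
  "computable n g \<Longrightarrow> computable n h \<Longrightarrow> computable n (\<lambda>xs. code_or (g xs) (h xs))"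
  unfolding code_or_def by (intro computable_intros)

section \<open>The axioms\<close>

text \<open>A number \<open>S\<close> stands for the set \<open>{i. bit S i}\<close>.  Each test below vanishes exactly when
  the condition it stands for holds, so that the formulas can branch on it with a computable
  \<open>if _ = 0\<close>.\<close>

definition popcount :: "nat \<Rightarrow> nat \<Rightarrow> nat" where
  "popcount N S = (\<Sum>i<N. digit S i)"

definition count_outside :: "nat \<Rightarrow> nat \<Rightarrow> nat \<Rightarrow> nat" where
  "count_outside N S c = (\<Sum>i<N. digit S i * (1 - digit c i))"

definition count_common :: "nat \<Rightarrow> nat \<Rightarrow> nat \<Rightarrow> nat" where
  "count_common N T c = (\<Sum>i<N. digit T i * digit c i)"

definition card_bound :: "enat \<Rightarrow> nat \<Rightarrow> nat" where
  "card_bound \<alpha> N = (case \<alpha> of enat a \<Rightarrow> a | \<infinity> \<Rightarrow> Suc N)"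

definition up_test :: "nat \<Rightarrow> nat \<Rightarrow> nat \<Rightarrow> nat" where
  "up_test c i j = (1 - digit c i) + digit c j"

definition meet_test :: "enat \<Rightarrow> nat \<Rightarrow> nat \<Rightarrow> nat \<Rightarrow> nat \<Rightarrow> nat" where
  "meet_test \<alpha> N c S m = (Suc (popcount N S) - card_bound \<alpha> N) + count_outside N S c + digit c m"

definition join_test :: "enat \<Rightarrow> nat \<Rightarrow> nat \<Rightarrow> nat \<Rightarrow> nat \<Rightarrow> nat" where
  "join_test \<beta> N c T m =
     (Suc (popcount N T) - card_bound \<beta> N) + (1 - digit c m) + count_common N T c"

definition base_test :: "nat \<Rightarrow> nat" where
  "base_test c = (1 - digit c 0) + digit c 1"

text \<open>These formulas speak about \<open>v\<^sub>0, \<dots>, v\<^sub>N\<^sub>-\<^sub>1\<close>, so \<open>v\<^sub>N\<close> is free to serve as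
  the bound variable.\<close>

definition is_meet_fm :: "nat \<Rightarrow> nat \<Rightarrow> nat \<Rightarrow> fm" where
  "is_meet_fm N S m = fAnd (big_and N (\<lambda>s. if digit S s = 0 then fTrue else FLe m s))
     (FAll N (FImp (big_and N (\<lambda>s. if digit S s = 0 then fTrue else FLe N s)) (FLe N m)))"

definition is_join_fm :: "nat \<Rightarrow> nat \<Rightarrow> nat \<Rightarrow> fm" where
  "is_join_fm N T m = fAnd (big_and N (\<lambda>s. if digit T s = 0 then fTrue else FLe s m))
     (FAll N (FImp (big_and N (\<lambda>s. if digit T s = 0 then fTrue else FLe s N)) (FLe m N)))"

definition up_closed_fm :: "nat \<Rightarrow> nat \<Rightarrow> fm" where
  "up_closed_fm N c = big_and N (\<lambda>i. big_and N (\<lambda>j.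
     if up_test c i j = 0 then fNeg (FLe i j) else fTrue))"

definition meet_closed_fm :: "enat \<Rightarrow> nat \<Rightarrow> nat \<Rightarrow> fm" where
  "meet_closed_fm \<alpha> N c = big_and (2 ^ N) (\<lambda>S. big_and N (\<lambda>m.
     if meet_test \<alpha> N c S m = 0 then fNeg (is_meet_fm N S m) else fTrue))"

definition join_prime_fm :: "enat \<Rightarrow> nat \<Rightarrow> nat \<Rightarrow> fm" where
  "join_prime_fm \<beta> N c = big_and (2 ^ N) (\<lambda>T. big_and N (\<lambda>m.
     if join_test \<beta> N c T m = 0 then fNeg (is_join_fm N T m) else fTrue))"

definition colouring_fm :: "enat \<Rightarrow> enat \<Rightarrow> nat \<Rightarrow> nat \<Rightarrow> fm" where
  "colouring_fm \<alpha> \<beta> N c = (if base_test c = 0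
     then fAnd (fAnd (up_closed_fm N c) (meet_closed_fm \<alpha> N c)) (join_prime_fm \<beta> N c) else FFalse)"

definition colourable_fm :: "enat \<Rightarrow> enat \<Rightarrow> nat \<Rightarrow> fm" where
  "colourable_fm \<alpha> \<beta> N = big_or (2 ^ N) (colouring_fm \<alpha> \<beta> N)"

definition rep_axiom :: "enat \<Rightarrow> enat \<Rightarrow> nat \<Rightarrow> fm" where
  "rep_axiom \<alpha> \<beta> n = forall_below (n + 2) (FImp (fNeg (FLe 0 1)) (colourable_fm \<alpha> \<beta> (n + 2)))"

lemma freevars_colourable_fm: "freevars (colourable_fm \<alpha> \<beta> N) \<subseteq> {..<N}"
proof -
  have "freevars (is_meet_fm N S m) \<subseteq> {..<N}" "freevars (is_join_fm N S m) \<subseteq> {..<N}"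
    if "m < N" for S m
    using that unfolding is_meet_fm_def is_join_fm_def by (auto split: if_splits)
  then have "freevars (up_closed_fm N c) \<subseteq> {..<N}" "freevars (meet_closed_fm \<alpha> N c) \<subseteq> {..<N}"
    "freevars (join_prime_fm \<beta> N c) \<subseteq> {..<N}" for c
    unfolding up_closed_fm_def meet_closed_fm_def join_prime_fm_def
    by (auto split: if_splits) (meson lessThan_iff subsetD)+
  then show ?thesis
    unfolding colourable_fm_def colouring_fm_def
    by (auto split: if_splits) (meson lessThan_iff subsetD)+
qed

lemma sentence_rep_axiom: "sentence (rep_axiom \<alpha> \<beta> n)"
  using freevars_colourable_fm[of \<alpha> \<beta> "n + 2"]
  unfolding sentence_def rep_axiom_def freevars_forall_below by auto

lemma computable_card_bound [computable_intros]:
  "computable n g \<Longrightarrow> computable n (\<lambda>xs. card_bound \<alpha> (g xs))"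
  by (cases \<alpha>) (auto simp: card_bound_def intro: computable_intros)

lemma computable_up_test [computable_intros]:
  "computable n g \<Longrightarrow> computable n h \<Longrightarrow> computable n k \<Longrightarrow>
     computable n (\<lambda>xs. up_test (g xs) (h xs) (k xs))"
  unfolding up_test_def by (intro computable_intros)

lemma computable_base_test [computable_intros]:
  "computable n g \<Longrightarrow> computable n (\<lambda>xs. base_test (g xs))"
  unfolding base_test_def by (intro computable_intros)

lemma computable_meet_test [computable_intros]:
  "computable n g \<Longrightarrow> computable n h \<Longrightarrow> computable n k \<Longrightarrow> computable n l \<Longrightarrow>
     computable n (\<lambda>xs. meet_test \<alpha> (g xs) (h xs) (k xs) (l xs))"
proof (rule computable_compose4[where f = "meet_test \<alpha>"])
  show "computable 4 (\<lambda>xs. meet_test \<alpha> (xs!0) (xs!1) (xs!2) (xs!3))"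
    unfolding meet_test_def popcount_def count_outside_def sum_eq_fold_range
    by (intro computable_intros; simp)
qed

lemma computable_join_test [computable_intros]:
  "computable n g \<Longrightarrow> computable n h \<Longrightarrow> computable n k \<Longrightarrow> computable n l \<Longrightarrow>
     computable n (\<lambda>xs. join_test \<beta> (g xs) (h xs) (k xs) (l xs))"
proof (rule computable_compose4[where f = "join_test \<beta>"])
  show "computable 4 (\<lambda>xs. join_test \<beta> (xs!0) (xs!1) (xs!2) (xs!3))"
    unfolding join_test_def popcount_def count_common_def sum_eq_fold_range
    by (intro computable_intros; simp)
qed

lemma computable_enc_is_meet_fm [computable_intros]:
  "computable n g \<Longrightarrow> computable n h \<Longrightarrow> computable n k \<Longrightarrow>
     computable n (\<lambda>xs. enc (is_meet_fm (g xs) (h xs) (k xs)))"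
proof (rule computable_compose3[where f = "\<lambda>N S m. enc (is_meet_fm N S m)"])
  show "computable 3 (\<lambda>xs. enc (is_meet_fm (xs!0) (xs!1) (xs!2)))"
    unfolding is_meet_fm_def by (simp only: enc_simps) (intro computable_intros; simp)
qed

lemma computable_enc_is_join_fm [computable_intros]:
  "computable n g \<Longrightarrow> computable n h \<Longrightarrow> computable n k \<Longrightarrow>
     computable n (\<lambda>xs. enc (is_join_fm (g xs) (h xs) (k xs)))"
proof (rule computable_compose3[where f = "\<lambda>N T m. enc (is_join_fm N T m)"])
  show "computable 3 (\<lambda>xs. enc (is_join_fm (xs!0) (xs!1) (xs!2)))"
    unfolding is_join_fm_def by (simp only: enc_simps) (intro computable_intros; simp)
qed

lemma computable_enc_up_closed_fm [computable_intros]: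
  "computable n g \<Longrightarrow> computable n h \<Longrightarrow> computable n (\<lambda>xs. enc (up_closed_fm (g xs) (h xs)))"
proof (rule computable_compose2[where f = "\<lambda>N c. enc (up_closed_fm N c)"])
  show "computable 2 (\<lambda>xs. enc (up_closed_fm (xs!0) (xs!1)))"
    unfolding up_closed_fm_def by (simp only: enc_simps) (intro computable_intros; simp)
qed

lemma computable_enc_meet_closed_fm [computable_intros]:
  "computable n g \<Longrightarrow> computable n h \<Longrightarrow> computable n (\<lambda>xs. enc (meet_closed_fm \<alpha> (g xs) (h xs)))"
proof (rule computable_compose2[where f = "\<lambda>N c. enc (meet_closed_fm \<alpha> N c)"])
  show "computable 2 (\<lambda>xs. enc (meet_closed_fm \<alpha> (xs!0) (xs!1)))"
    unfolding meet_closed_fm_def by (simp only: enc_simps) (intro computable_intros; simp)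
qed

lemma computable_enc_join_prime_fm [computable_intros]:
  "computable n g \<Longrightarrow> computable n h \<Longrightarrow> computable n (\<lambda>xs. enc (join_prime_fm \<beta> (g xs) (h xs)))"
proof (rule computable_compose2[where f = "\<lambda>N c. enc (join_prime_fm \<beta> N c)"])
  show "computable 2 (\<lambda>xs. enc (join_prime_fm \<beta> (xs!0) (xs!1)))"
    unfolding join_prime_fm_def by (simp only: enc_simps) (intro computable_intros; simp)
qed

lemma computable_enc_colouring_fm [computable_intros]:
  "computable n g \<Longrightarrow> computable n h \<Longrightarrow> computable n (\<lambda>xs. enc (colouring_fm \<alpha> \<beta> (g xs) (h xs)))"
proof (rule computable_compose2[where f = "\<lambda>N c. enc (colouring_fm \<alpha> \<beta> N c)"])
  show "computable 2 (\<lambda>xs. enc (colouring_fm \<alpha> \<beta> (xs!0) (xs!1)))"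
    unfolding colouring_fm_def by (simp only: enc_simps) (intro computable_intros; simp)
qed

lemma computable_enc_rep_axiom: "computable 1 (\<lambda>xs. enc (rep_axiom \<alpha> \<beta> (xs!0)))"
  unfolding rep_axiom_def colourable_fm_def
  by (simp only: enc_simps) (intro computable_intros; simp)

lemma enc_rep_axiom_ge: "n \<le> enc (rep_axiom \<alpha> \<beta> n)"
proof -
  have "b \<le> triangle (a + b)" for a b
    by (induction b) auto
  then have prod_encode_gt: "b < prod_encode (Suc a, b)" for a b
    by (simp add: prod_encode_def)
  have "N \<le> enc (forall_below N \<psi>)" for N \<psi>
  proof (induction N)
    case (Suc N)
    have "enc (forall_below N \<psi>) \<le> prod_encode (N, enc (forall_below N \<psi>))"
      by (rule le_prod_encode_2)
    also have "\<dots> < prod_encode (4, prod_encode (N, enc (forall_below N \<psi>)))"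
      using prod_encode_gt[where a = 3]
      by (simp add: numeral_eq_Suc)
    finally show ?case
      using Suc by (simp add: forall_below_def)
  qed simp
  then show ?thesis
    unfolding rep_axiom_def by (metis le_add1 le_trans)
qed

text \<open>Since \<open>n \<le> enc (rep_axiom \<alpha> \<beta> n)\<close>, a number \<open>x\<close> codes an axiom iff it codes one of the
  axioms with index at most \<open>x\<close>; the product \<open>\<chi> x\<close> below vanishes exactly in that case.\<close>

lemma recursive_rep_axioms: "recursive_fmset (range (rep_axiom \<alpha> \<beta>))"
proof -
  define \<chi> where "\<chi> x = (\<Prod>i<Suc x. (enc (rep_axiom \<alpha> \<beta> i) - x) + (x - enc (rep_axiom \<alpha> \<beta> i)))"
    for x
  have "computable 1 (\<lambda>xs. \<chi> (xs!0))"
    unfolding \<chi>_def prod_eq_fold_range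
    by (intro computable_intros computable_compose1[where f = "\<lambda>i. enc (rep_axiom \<alpha> \<beta> i)",
          OF computable_enc_rep_axiom]; simp)
  then obtain f where f: "recfn 1 f" "\<And>x. f [x] = \<chi> x"
    unfolding computable_def by (metis One_nat_def length_Cons list.size(3) nth_Cons_0)
  have "a - b + (b - a) = 0 \<longleftrightarrow> a = b" for a b :: nat
    by arith
  then have "\<chi> x = 0 \<longleftrightarrow> (\<exists>i\<le>x. enc (rep_axiom \<alpha> \<beta> i) = x)" for x
    by (simp add: \<chi>_def lessThan_Suc_atMost Bex_def del: prod.lessThan_Suc)
  also have "\<dots> x \<longleftrightarrow> x \<in> enc ` range (rep_axiom \<alpha> \<beta>)" for x
    using enc_rep_axiom_ge[of _ \<alpha> \<beta>] by fastforce
  finally show ?thesis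
    unfolding recursive_fmset_def recursive_set_def using f by metis
qed

lemma popcount_eq_card: "popcount N S = card {s. s < N \<and> bit S s}"
  by (simp add: popcount_def digit_eq_of_bool Int_def)

lemma popcount_le: "popcount N S \<le> N"
proof -
  have "card {s. s < N \<and> bit S s} \<le> card {..<N}"
    by (rule card_mono) auto
  then show ?thesis by (simp add: popcount_eq_card)
qed

lemma card_bound_less_iff: "p \<le> N \<Longrightarrow> p < card_bound \<alpha> N \<longleftrightarrow> enat p < \<alpha>"
  by (cases \<alpha>) (auto simp: card_bound_def)

lemma up_test_eq_0_iff: "up_test c i j = 0 \<longleftrightarrow> bit c i \<and> \<not> bit c j"
  by (simp add: up_test_def digit_eq_of_bool)

lemma base_test_eq_0_iff: "base_test c = 0 \<longleftrightarrow> bit c 0 \<and> \<not> bit c 1"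
  by (simp add: base_test_def digit_eq_of_bool)

lemma meet_test_eq_0_iff:
  "meet_test \<alpha> N c S m = 0 \<longleftrightarrow>
     enat (popcount N S) < \<alpha> \<and> (\<forall>i<N. bit S i \<longrightarrow> bit c i) \<and> \<not> bit c m"
proof -
  have "count_outside N S c = 0 \<longleftrightarrow> (\<forall>i<N. bit S i \<longrightarrow> bit c i)"
    by (auto simp: count_outside_def digit_eq_of_bool)
  then show ?thesis
    using card_bound_less_iff[OF popcount_le, of N S \<alpha>]
    by (auto simp: meet_test_def digit_eq_of_bool)
qed

lemma join_test_eq_0_iff:
  "join_test \<beta> N c T m = 0 \<longleftrightarrow>
     enat (popcount N T) < \<beta> \<and> bit c m \<and> (\<forall>i<N. bit T i \<longrightarrow> \<not> bit c i)"
proof -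
  have "count_common N T c = 0 \<longleftrightarrow> (\<forall>i<N. bit T i \<longrightarrow> \<not> bit c i)"
    by (auto simp: count_common_def digit_eq_of_bool)
  then show ?thesis
    using card_bound_less_iff[OF popcount_le, of N T \<beta>]
    by (auto simp: join_test_def digit_eq_of_bool)
qed

text \<open>A colouring of the indices \<open>0, \<dots>, N - 1\<close> of a tuple \<open>e\<close> that behaves like the trace of a
  prime filter containing \<open>e 0\<close> but not \<open>e 1\<close>, as far as the tuple can tell.\<close>

definition good_colouring ::
  "enat \<Rightarrow> enat \<Rightarrow> 'a set \<Rightarrow> ('a \<Rightarrow> 'a \<Rightarrow> bool) \<Rightarrow> (nat \<Rightarrow> 'a) \<Rightarrow> nat \<Rightarrow> (nat \<Rightarrow> bool) \<Rightarrow> bool"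
  where
  "good_colouring \<alpha> \<beta> A le e N col \<longleftrightarrow> col 0 \<and> \<not> col 1 \<and>
     (\<forall>i<N. \<forall>j<N. col i \<longrightarrow> le (e i) (e j) \<longrightarrow> col j) \<and>
     (\<forall>SS m. SS \<subseteq> {..<N} \<longrightarrow> enat (card SS) < \<alpha> \<longrightarrow> m < N \<longrightarrow> (\<forall>s\<in>SS. col s) \<longrightarrow>
        is_meet A le (e ` SS) (e m) \<longrightarrow> col m) \<and>
     (\<forall>TT m. TT \<subseteq> {..<N} \<longrightarrow> enat (card TT) < \<beta> \<longrightarrow> m < N \<longrightarrow> col m \<longrightarrow>
        is_join A le (e ` TT) (e m) \<longrightarrow> (\<exists>t\<in>TT. col t))"

lemma good_colouringD:
  assumes "good_colouring \<alpha> \<beta> A le e N col"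
  shows "col 0" and "\<not> col 1"
    and "i < N \<Longrightarrow> j < N \<Longrightarrow> col i \<Longrightarrow> le (e i) (e j) \<Longrightarrow> col j"
    and "SS \<subseteq> {..<N} \<Longrightarrow> enat (card SS) < \<alpha> \<Longrightarrow> m < N \<Longrightarrow> \<forall>s\<in>SS. col s \<Longrightarrow>
      is_meet A le (e ` SS) (e m) \<Longrightarrow> col m"
    and "TT \<subseteq> {..<N} \<Longrightarrow> enat (card TT) < \<beta> \<Longrightarrow> m < N \<Longrightarrow> col m \<Longrightarrow>
      is_join A le (e ` TT) (e m) \<Longrightarrow> \<exists>t\<in>TT. col t"
  using assms unfolding good_colouring_def by blast+

lemma sat_is_meet_fm:
  "m < N \<Longrightarrow> \<forall>i<N. e i \<in> A \<Longrightarrow>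
   sat A le e (is_meet_fm N S m) \<longleftrightarrow> is_meet A le (e ` {s. s < N \<and> bit S s}) (e m)"
  unfolding is_meet_fm_def is_meet_def by (auto simp: digit_eq_of_bool)

lemma sat_is_join_fm:
  "m < N \<Longrightarrow> \<forall>i<N. e i \<in> A \<Longrightarrow>
   sat A le e (is_join_fm N T m) \<longleftrightarrow> is_join A le (e ` {s. s < N \<and> bit T s}) (e m)"
  unfolding is_join_fm_def is_join_def by (auto simp: digit_eq_of_bool)

lemma sat_up_closed_fm:
  "sat A le e (up_closed_fm N c) \<longleftrightarrow>
     (\<forall>i<N. \<forall>j<N. bit c i \<longrightarrow> le (e i) (e j) \<longrightarrow> bit c j)"
  unfolding up_closed_fm_def by (auto simp: up_test_eq_0_iff)

lemma sat_meet_closed_fm: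
  assumes "\<forall>i<N. e i \<in> A"
  shows "sat A le e (meet_closed_fm \<alpha> N c) \<longleftrightarrow>
    (\<forall>SS m. SS \<subseteq> {..<N} \<longrightarrow> enat (card SS) < \<alpha> \<longrightarrow> m < N \<longrightarrow> (\<forall>s\<in>SS. bit c s) \<longrightarrow>
       is_meet A le (e ` SS) (e m) \<longrightarrow> bit c m)"
proof -
  let ?P = "\<lambda>SS. \<forall>m<N. enat (card SS) < \<alpha> \<longrightarrow> (\<forall>s\<in>SS. bit c s) \<longrightarrow>
     is_meet A le (e ` SS) (e m) \<longrightarrow> bit c m"
  have "sat A le e (meet_closed_fm \<alpha> N c) \<longleftrightarrow>
      (\<forall>S::nat. S < 2 ^ N \<longrightarrow> (\<forall>m<N. meet_test \<alpha> N c S m = 0 \<longrightarrow> \<not> sat A le e (is_meet_fm N S m)))"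
    unfolding meet_closed_fm_def by auto
  also have "\<dots> \<longleftrightarrow> (\<forall>S::nat. S < 2 ^ N \<longrightarrow> ?P {s. s < N \<and> bit S s})"
    using assms by (simp add: meet_test_eq_0_iff popcount_eq_card sat_is_meet_fm) blast
  also have "\<dots> \<longleftrightarrow> (\<forall>SS\<subseteq>{..<N}. ?P SS)"
    by (rule all_codes_iff_all_subsets)
  finally show ?thesis by blast
qed

lemma sat_join_prime_fm:
  assumes "\<forall>i<N. e i \<in> A"
  shows "sat A le e (join_prime_fm \<beta> N c) \<longleftrightarrow>
    (\<forall>TT m. TT \<subseteq> {..<N} \<longrightarrow> enat (card TT) < \<beta> \<longrightarrow> m < N \<longrightarrow> bit c m \<longrightarrow>
       is_join A le (e ` TT) (e m) \<longrightarrow> (\<exists>t\<in>TT. bit c t))"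
proof -
  let ?P = "\<lambda>SS. \<forall>m<N. enat (card SS) < \<beta> \<longrightarrow> bit c m \<longrightarrow>
     is_join A le (e ` SS) (e m) \<longrightarrow> (\<exists>t\<in>SS. bit c t)"
  have "sat A le e (join_prime_fm \<beta> N c) \<longleftrightarrow>
      (\<forall>T::nat. T < 2 ^ N \<longrightarrow> (\<forall>m<N. join_test \<beta> N c T m = 0 \<longrightarrow> \<not> sat A le e (is_join_fm N T m)))"
    unfolding join_prime_fm_def by auto
  also have "\<dots> \<longleftrightarrow> (\<forall>T::nat. T < 2 ^ N \<longrightarrow> ?P {s. s < N \<and> bit T s})"
    using assms by (simp add: join_test_eq_0_iff popcount_eq_card sat_is_join_fm) blast
  also have "\<dots> \<longleftrightarrow> (\<forall>SS\<subseteq>{..<N}. ?P SS)"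
    by (rule all_codes_iff_all_subsets)
  finally show ?thesis by blast
qed

lemma sat_colouring_fm:
  "\<forall>i<N. e i \<in> A \<Longrightarrow>
   sat A le e (colouring_fm \<alpha> \<beta> N c) \<longleftrightarrow> good_colouring \<alpha> \<beta> A le e N (\<lambda>i. bit c i)"
  unfolding colouring_fm_def good_colouring_def
  by (simp add: base_test_eq_0_iff sat_up_closed_fm sat_meet_closed_fm sat_join_prime_fm)

lemma good_colouring_cong:
  assumes "good_colouring \<alpha> \<beta> A le e N col" "2 \<le> N" "\<forall>i<N. col' i = col i"
  shows "good_colouring \<alpha> \<beta> A le e N col'"
proof -
  have eq: "col' i \<longleftrightarrow> col i" if "i < N" for i
    using assms(3) that by blast
  have eq_on: "(\<forall>s\<in>SS. col' s) \<longleftrightarrow> (\<forall>s\<in>SS. col s)" "(\<exists>s\<in>SS. col' s) \<longleftrightarrow> (\<exists>s\<in>SS. col s)"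
    if "SS \<subseteq> {..<N}" for SS
    using that eq by auto
  show ?thesis
    unfolding good_colouring_def
  proof (intro conjI allI impI)
    show "col' 0" "\<not> col' 1"
      using assms(1,2) eq[of 0] eq[of 1] by (simp_all add: good_colouring_def)
  next
    fix i j assume "i < N" "j < N" "col' i" "le (e i) (e j)"
    then show "col' j"
      using assms(1) eq[of i] eq[of j] unfolding good_colouring_def by blast
  next
    fix SS m assume "SS \<subseteq> {..<N}" "enat (card SS) < \<alpha>" "m < N" "\<forall>s\<in>SS. col' s"
      "is_meet A le (e ` SS) (e m)"
    then show "col' m"
      using assms(1) eq[of m] eq_on(1)[of SS] unfolding good_colouring_def by blast
  next
    fix TT m assume "TT \<subseteq> {..<N}" "enat (card TT) < \<beta>" "m < N" "col' m"
      "is_join A le (e ` TT) (e m)"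
    then show "\<exists>t\<in>TT. col' t"
      using assms(1) eq[of m] eq_on(2)[of TT] unfolding good_colouring_def by blast
  qed
qed

lemma sat_colourable_fm:
  assumes "2 \<le> N" "\<forall>i<N. e i \<in> A"
  shows "sat A le e (colourable_fm \<alpha> \<beta> N) \<longleftrightarrow> (\<exists>col. good_colouring \<alpha> \<beta> A le e N col)"
proof
  assume "sat A le e (colourable_fm \<alpha> \<beta> N)"
  then show "\<exists>col. good_colouring \<alpha> \<beta> A le e N col"
    unfolding colourable_fm_def using sat_colouring_fm[OF assms(2)] by auto
next
  assume "\<exists>col. good_colouring \<alpha> \<beta> A le e N col"
  then obtain col where col: "good_colouring \<alpha> \<beta> A le e N col" ..
  obtain c :: nat where c: "c < 2 ^ N" "\<forall>i<N. bit c i \<longleftrightarrow> i \<in> {i. i < N \<and> col i}"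
    using code_of_subset[of "{i. i < N \<and> col i}" N] by auto
  then have "good_colouring \<alpha> \<beta> A le e N (bit c)"
    using good_colouring_cong[OF col assms(1)] by simp
  then show "sat A le e (colourable_fm \<alpha> \<beta> N)"
    unfolding colourable_fm_def using c(1) sat_colouring_fm[OF assms(2)] by auto
qed

lemma models_rep_axioms_iff:
  "models A le (range (rep_axiom \<alpha> \<beta>)) \<longleftrightarrow>
     (\<forall>N\<ge>2. \<forall>e. (\<forall>i. e i \<in> A) \<longrightarrow> \<not> le (e 0) (e 1) \<longrightarrow> (\<exists>col. good_colouring \<alpha> \<beta> A le e N col))"
proof -
  have sat_rep_axiom: "sat A le e (rep_axiom \<alpha> \<beta> n) \<longleftrightarrow>
      (\<forall>e'. (\<forall>i<n + 2. e' i \<in> A) \<longrightarrow> (\<forall>i\<ge>n + 2. e' i = e i) \<longrightarrow>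
        \<not> le (e' 0) (e' 1) \<longrightarrow> (\<exists>col. good_colouring \<alpha> \<beta> A le e' (n + 2) col))" for e n
    unfolding rep_axiom_def sat_forall_below by (simp add: sat_colourable_fm)
  show ?thesis
  proof (intro iffI allI impI)
    fix N :: nat and e :: "nat \<Rightarrow> 'a"
    assume "models A le (range (rep_axiom \<alpha> \<beta>))" "2 \<le> N" and e: "\<forall>i. e i \<in> A" "\<not> le (e 0) (e 1)"
    obtain n where N: "N = n + 2"
      using \<open>2 \<le> N\<close> by (metis le_add_diff_inverse2)
    have "sat A le e (rep_axiom \<alpha> \<beta> n)"
      using \<open>models A le (range (rep_axiom \<alpha> \<beta>))\<close> e(1) unfolding models_def by blast
    then show "\<exists>col. good_colouring \<alpha> \<beta> A le e N col"
      using e unfolding sat_rep_axiom N by simp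
  next
    assume colourable: "\<forall>N\<ge>2. \<forall>e. (\<forall>i. e i \<in> A) \<longrightarrow> \<not> le (e 0) (e 1) \<longrightarrow>
      (\<exists>col. good_colouring \<alpha> \<beta> A le e N col)"
    have "sat A le e (rep_axiom \<alpha> \<beta> n)" if e: "\<forall>i. e i \<in> A" for e :: "nat \<Rightarrow> 'a" and n
      unfolding sat_rep_axiom
    proof (intro allI impI)
      fix e' assume "\<forall>i<n + 2. e' i \<in> A" "\<forall>i\<ge>n + 2. e' i = e i" "\<not> le (e' 0) (e' 1)"
      moreover have "\<forall>i. e' i \<in> A"
        using calculation(1,2) e by (metis not_le)
      ultimately show "\<exists>col. good_colouring \<alpha> \<beta> A le e' (n + 2) col"
        using colourable[rule_format, of "n + 2" e'] by simp
    qed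
    then show "models A le (range (rep_axiom \<alpha> \<beta>))"
      unfolding models_def by blast
  qed
qed

section \<open>Prime filters\<close>

text \<open>The points of a representation are, up to identification, the prime filters below: a point
  \<open>x\<close> yields the filter \<open>{p \<in> A. x \<in> h p}\<close>, and conversely the prime filters themselves can
  serve as the points.\<close>

definition prime_filter :: "enat \<Rightarrow> enat \<Rightarrow> 'a set \<Rightarrow> ('a \<Rightarrow> 'a \<Rightarrow> bool) \<Rightarrow> 'a set \<Rightarrow> bool" where
  "prime_filter \<alpha> \<beta> A le F \<longleftrightarrow> F \<subseteq> A \<and> (\<forall>x\<in>F. \<forall>y\<in>A. le x y \<longrightarrow> y \<in> F) \<and>
     (\<forall>S m. S \<subseteq> F \<longrightarrow> card_less S \<alpha> \<longrightarrow> is_meet A le S m \<longrightarrow> m \<in> F) \<and>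
     (\<forall>T m. T \<subseteq> A \<longrightarrow> card_less T \<beta> \<longrightarrow> is_join A le T m \<longrightarrow> m \<in> F \<longrightarrow> (\<exists>t\<in>T. t \<in> F))"

definition separated_by_prime_filters :: "enat \<Rightarrow> enat \<Rightarrow> 'a set \<Rightarrow> ('a \<Rightarrow> 'a \<Rightarrow> bool) \<Rightarrow> bool" where
  "separated_by_prime_filters \<alpha> \<beta> A le \<longleftrightarrow>
     (\<forall>p\<in>A. \<forall>q\<in>A. \<not> le p q \<longrightarrow> (\<exists>F. prime_filter \<alpha> \<beta> A le F \<and> p \<in> F \<and> q \<notin> F))"

lemma representationD:
  assumes "representation \<alpha> \<beta> A le X h"
  shows "p \<in> A \<Longrightarrow> h p \<subseteq> X"
    and "p \<in> A \<Longrightarrow> q \<in> A \<Longrightarrow> le p q \<longleftrightarrow> h p \<subseteq> h q"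
    and "S \<subseteq> A \<Longrightarrow> card_less S \<alpha> \<Longrightarrow> is_meet A le S m \<Longrightarrow> h m = X \<inter> (\<Inter>s\<in>S. h s)"
    and "T \<subseteq> A \<Longrightarrow> card_less T \<beta> \<Longrightarrow> is_join A le T m \<Longrightarrow> h m = (\<Union>t\<in>T. h t)"
  using assms unfolding representation_def by simp_all

lemma prime_filterD:
  assumes "prime_filter \<alpha> \<beta> A le F"
  shows "F \<subseteq> A"
    and "x \<in> F \<Longrightarrow> y \<in> A \<Longrightarrow> le x y \<Longrightarrow> y \<in> F"
    and "S \<subseteq> F \<Longrightarrow> card_less S \<alpha> \<Longrightarrow> is_meet A le S m \<Longrightarrow> m \<in> F"
    and "T \<subseteq> A \<Longrightarrow> card_less T \<beta> \<Longrightarrow> is_join A le T m \<Longrightarrow> m \<in> F \<Longrightarrow> \<exists>t\<in>T. t \<in> F"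
  using assms unfolding prime_filter_def by simp_all

lemma prime_filter_of_point:
  assumes R: "representation \<alpha> \<beta> A le X h" and "x \<in> X"
  shows "prime_filter \<alpha> \<beta> A le {p \<in> A. x \<in> h p}"
  unfolding prime_filter_def
proof (intro conjI allI impI ballI)
  fix p q assume "p \<in> {p \<in> A. x \<in> h p}" "q \<in> A" "le p q"
  then show "q \<in> {p \<in> A. x \<in> h p}"
    using representationD(2)[OF R, of p q] by auto
next
  fix S m assume S: "S \<subseteq> {p \<in> A. x \<in> h p}" "card_less S \<alpha>" "is_meet A le S m"
  then have "h m = X \<inter> (\<Inter>s\<in>S. h s)"
    using representationD(3)[OF R, of S m] by auto
  then show "m \<in> {p \<in> A. x \<in> h p}"
    using S \<open>x \<in> X\<close> by (auto simp: is_meet_def)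
next
  fix T m assume "T \<subseteq> A" "card_less T \<beta>" "is_join A le T m" "m \<in> {p \<in> A. x \<in> h p}"
  then show "\<exists>t\<in>T. t \<in> {p \<in> A. x \<in> h p}"
    using representationD(4)[OF R, of T m] by auto
qed auto

lemma representation_by_prime_filters:
  assumes "separated_by_prime_filters \<alpha> \<beta> A le"
  shows "representation \<alpha> \<beta> A le {F. prime_filter \<alpha> \<beta> A le F}
    (\<lambda>p. {F. prime_filter \<alpha> \<beta> A le F \<and> p \<in> F})"
  unfolding representation_def
proof (intro conjI ballI allI impI)
  fix p q assume pq: "p \<in> A" "q \<in> A"
  show "le p q \<longleftrightarrow> {F. prime_filter \<alpha> \<beta> A le F \<and> p \<in> F} \<subseteq> {F. prime_filter \<alpha> \<beta> A le F \<and> q \<in> F}"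
  proof
    assume "le p q"
    have "q \<in> F" if "prime_filter \<alpha> \<beta> A le F" "p \<in> F" for F
      using prime_filterD(2)[OF that] pq(2) \<open>le p q\<close> .
    then show "{F. prime_filter \<alpha> \<beta> A le F \<and> p \<in> F} \<subseteq> {F. prime_filter \<alpha> \<beta> A le F \<and> q \<in> F}"
      by blast
  next
    assume "{F. prime_filter \<alpha> \<beta> A le F \<and> p \<in> F} \<subseteq> {F. prime_filter \<alpha> \<beta> A le F \<and> q \<in> F}"
    then show "le p q"
      using assms pq unfolding separated_by_prime_filters_def by blast
  qed
next
  fix S m assume S: "S \<subseteq> A \<and> card_less S \<alpha> \<and> is_meet A le S m"
  then have "s \<in> F" if "prime_filter \<alpha> \<beta> A le F" "m \<in> F" "s \<in> S" for F s
    using prime_filterD(2)[OF that(1,2)] that(3) by (auto simp: is_meet_def)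
  moreover have "m \<in> F" if "prime_filter \<alpha> \<beta> A le F" "S \<subseteq> F" for F
    using prime_filterD(3)[OF that] S by blast
  ultimately show "{F. prime_filter \<alpha> \<beta> A le F \<and> m \<in> F} =
      {F. prime_filter \<alpha> \<beta> A le F} \<inter> (\<Inter>s\<in>S. {F. prime_filter \<alpha> \<beta> A le F \<and> s \<in> F})"
    by blast
next
  fix T m assume T: "T \<subseteq> A \<and> card_less T \<beta> \<and> is_join A le T m"
  then have "m \<in> F" if "prime_filter \<alpha> \<beta> A le F" "t \<in> T" "t \<in> F" for F t
    using prime_filterD(2)[OF that(1,3)] that(2) by (auto simp: is_join_def)
  moreover have "\<exists>t\<in>T. t \<in> F" if "prime_filter \<alpha> \<beta> A le F" "m \<in> F" for F
    using prime_filterD(4)[OF that(1)] that(2) T by blast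
  ultimately show "{F. prime_filter \<alpha> \<beta> A le F \<and> m \<in> F} =
      (\<Union>t\<in>T. {F. prime_filter \<alpha> \<beta> A le F \<and> t \<in> F})"
    by blast
qed auto

lemma representable_iff_separated_by_prime_filters:
  "representable \<alpha> \<beta> A le \<longleftrightarrow> separated_by_prime_filters \<alpha> \<beta> A le"
proof
  assume "representable \<alpha> \<beta> A le"
  then obtain X :: "'a set set" and h where R: "representation \<alpha> \<beta> A le X h"
    unfolding representable_def by blast
  show "separated_by_prime_filters \<alpha> \<beta> A le"
    unfolding separated_by_prime_filters_def
  proof (intro ballI impI)
    fix p q assume p: "p \<in> A" and q: "q \<in> A" and "\<not> le p q"
    then have "\<not> h p \<subseteq> h q"
      using representationD(2)[OF R p q] by simp
    then obtain x where x: "x \<in> h p" "x \<notin> h q"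
      by blast
    moreover have "x \<in> X"
      using representationD(1)[OF R p] x(1) by blast
    ultimately show "\<exists>F. prime_filter \<alpha> \<beta> A le F \<and> p \<in> F \<and> q \<notin> F"
      using prime_filter_of_point[OF R] p by (intro exI[of _ "{p \<in> A. x \<in> h p}"]) simp
  qed
next
  assume "separated_by_prime_filters \<alpha> \<beta> A le"
  then show "representable \<alpha> \<beta> A le"
    unfolding representable_def by (intro exI) (rule representation_by_prime_filters)
qed

section \<open>Good colourings and prime filters\<close>

lemma card_less_image:
  fixes N :: nat
  assumes "SS \<subseteq> {..<N}" "enat (card SS) < \<kappa>"
  shows "card_less (e ` SS) \<kappa>"
proof -
  have "finite SS"
    by (rule finite_subset[OF assms(1)]) simp
  moreover from this have "enat (card (e ` SS)) \<le> enat (card SS)"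
    by (simp add: card_image_le)
  then have "enat (card (e ` SS)) < \<kappa>"
    using assms(2) by (rule le_less_trans)
  ultimately show ?thesis
    unfolding card_less_def by simp
qed

lemma good_colouring_of_prime_filter:
  assumes F: "prime_filter \<alpha> \<beta> A le F" and e: "\<forall>i<N. e i \<in> A" "e 0 \<in> F" "e 1 \<notin> F"
  shows "good_colouring \<alpha> \<beta> A le e N (\<lambda>i. e i \<in> F)"
  unfolding good_colouring_def
proof (intro conjI allI impI)
  fix i j assume "i < N" "j < N" "e i \<in> F" "le (e i) (e j)"
  then show "e j \<in> F"
    using prime_filterD(2)[OF F \<open>e i \<in> F\<close> _ \<open>le (e i) (e j)\<close>] e(1) by simp
next
  fix SS m assume SS: "SS \<subseteq> {..<N}" "enat (card SS) < \<alpha>" and "\<forall>s\<in>SS. e s \<in> F"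
    and meet: "is_meet A le (e ` SS) (e m)"
  then have "e ` SS \<subseteq> F"
    by auto
  then show "e m \<in> F"
    using prime_filterD(3)[OF F _ card_less_image[OF SS] meet] by simp
next
  fix TT m assume TT: "TT \<subseteq> {..<N}" "enat (card TT) < \<beta>" and "e m \<in> F"
    and join: "is_join A le (e ` TT) (e m)"
  moreover have "e ` TT \<subseteq> A"
    using TT(1) e(1) by auto
  ultimately have "\<exists>t\<in>e ` TT. t \<in> F"
    using prime_filterD(4)[OF F _ card_less_image[OF TT] join] by simp
  then show "\<exists>t\<in>TT. e t \<in> F"
    by simp
qed (use e in simp_all)

lemma good_colourings_if_separated:
  assumes "separated_by_prime_filters \<alpha> \<beta> A le" "\<forall>i. e i \<in> A" "\<not> le (e 0) (e 1)"
  shows "\<exists>col. good_colouring \<alpha> \<beta> A le e N col"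
proof -
  obtain F where "prime_filter \<alpha> \<beta> A le F" "e 0 \<in> F" "e 1 \<notin> F"
    using assms unfolding separated_by_prime_filters_def by blast
  then have "good_colouring \<alpha> \<beta> A le e N (\<lambda>i. e i \<in> F)"
    using assms(2) by (intro good_colouring_of_prime_filter) simp_all
  then show ?thesis
    by blast
qed

lemma good_colouring_mono:
  assumes "good_colouring \<alpha> \<beta> A le e N' col" "N \<le> N'"
  shows "good_colouring \<alpha> \<beta> A le e N col"
proof -
  have "{..<N} \<subseteq> {..<N'}"
    using assms(2) by auto
  then show ?thesis
    using assms(1) unfolding good_colouring_def by (meson less_le_trans assms(2) subset_trans)
qed

definition extendible_colouring ::
  "enat \<Rightarrow> enat \<Rightarrow> 'a set \<Rightarrow> ('a \<Rightarrow> 'a \<Rightarrow> bool) \<Rightarrow> (nat \<Rightarrow> 'a) \<Rightarrow> nat \<Rightarrow> (nat \<Rightarrow> bool) \<Rightarrow> bool"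
  where
  "extendible_colouring \<alpha> \<beta> A le e N col \<longleftrightarrow>
     (\<forall>N'\<ge>N. \<exists>col'. good_colouring \<alpha> \<beta> A le e N' col' \<and> (\<forall>i<N. col' i = col i))"

text \<open>The pigeonhole step of Koenig's lemma: if neither value of the next colour extended to all
  larger tuples, the two failures would be witnessed at two lengths, and a good colouring of the
  larger length would contradict one of them.\<close>

lemma extendible_colouring_Suc:
  assumes "extendible_colouring \<alpha> \<beta> A le e N col"
  shows "\<exists>b. extendible_colouring \<alpha> \<beta> A le e (Suc N) (col(N := b))"
proof (rule ccontr)
  assume "\<nexists>b. extendible_colouring \<alpha> \<beta> A le e (Suc N) (col(N := b))"
  then have bad: "\<And>b. \<exists>N'\<ge>Suc N. \<forall>col'. good_colouring \<alpha> \<beta> A le e N' col' \<longrightarrow>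
      \<not> (\<forall>i<Suc N. col' i = (col(N := b)) i)"
    unfolding extendible_colouring_def by blast
  obtain N1 where N1: "N1 \<ge> Suc N"
    "\<And>col'. good_colouring \<alpha> \<beta> A le e N1 col' \<Longrightarrow> \<not> (\<forall>i<Suc N. col' i = (col(N := True)) i)"
    using bad[of True] by blast
  obtain N2 where N2: "N2 \<ge> Suc N"
    "\<And>col'. good_colouring \<alpha> \<beta> A le e N2 col' \<Longrightarrow> \<not> (\<forall>i<Suc N. col' i = (col(N := False)) i)"
    using bad[of False] by blast
  have "N \<le> max N1 N2"
    using N1(1) by simp
  then obtain c where c: "good_colouring \<alpha> \<beta> A le e (max N1 N2) c" "\<forall>i<N. c i = col i"
    using assms unfolding extendible_colouring_def by blast
  obtain b where b: "c N = b"
    by simp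
  then have agree: "\<forall>i<Suc N. c i = (col(N := b)) i"
    using c(2) by (auto simp: less_Suc_eq)
  have g1: "good_colouring \<alpha> \<beta> A le e N1 c" and g2: "good_colouring \<alpha> \<beta> A le e N2 c"
    using good_colouring_mono[OF c(1)] by simp_all
  show False
  proof (cases b)
    case True
    with agree have "\<forall>i<Suc N. c i = (col(N := True)) i"
      by simp
    with N1(2)[OF g1] show False ..
  next
    case False
    with agree have "\<forall>i<Suc N. c i = (col(N := False)) i"
      by simp
    with N2(2)[OF g2] show False ..
  qed
qed

lemma good_colouring_limit:
  assumes "\<And>N. \<exists>col. good_colouring \<alpha> \<beta> A le e N col"
  shows "\<exists>col. \<forall>N\<ge>2. good_colouring \<alpha> \<beta> A le e N col"
proof -
  let ?X = "extendible_colouring \<alpha> \<beta> A le e"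
  define B where "B = rec_nat (\<lambda>_. False) (\<lambda>k c. SOME c'. (\<exists>b. c' = c(k := b)) \<and> ?X (Suc k) c')"
  have B_Suc: "B (Suc k) = (SOME c'. (\<exists>b. c' = (B k)(k := b)) \<and> ?X (Suc k) c')" for k
    by (simp add: B_def)
  have step: "(\<exists>b. B (Suc k) = (B k)(k := b)) \<and> ?X (Suc k) (B (Suc k))" if X: "?X k (B k)" for k
  proof -
    obtain b where "?X (Suc k) ((B k)(k := b))"
      using extendible_colouring_Suc[OF X] by blast
    then have "\<exists>c'. (\<exists>b. c' = (B k)(k := b)) \<and> ?X (Suc k) c'"
      by blast
    then show ?thesis
      unfolding B_Suc by (rule someI_ex)
  qed
  have XB: "?X k (B k)" for k
  proof (induction k)
    case 0
    show ?case
      using assms by (simp add: extendible_colouring_def)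
  next
    case (Suc k)
    then show ?case
      using step by blast
  qed
  have B_stable: "B k i = B (Suc i) i" if "i < k" for i k
    using that
  proof (induction k)
    case (Suc k)
    then show ?case
      using step[OF XB[of k]] by (cases "i = k") auto
  qed simp
  have "good_colouring \<alpha> \<beta> A le e N (\<lambda>i. B (Suc i) i)" if "2 \<le> N" for N
  proof -
    obtain col where col: "good_colouring \<alpha> \<beta> A le e N col" "\<forall>i<N. col i = B N i"
      using XB[of N] unfolding extendible_colouring_def by blast
    have "\<forall>i<N. B (Suc i) i = col i"
      using col(2) B_stable[of _ N] by simp
    then show ?thesis
      by (rule good_colouring_cong[OF col(1) that])
  qed
  then show ?thesis
    by blast
qed

text \<open>Here the countability of \<open>A\<close> enters: the elements of \<open>A :: nat set\<close> serve as their own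
  indices, shifted up two places to make room for \<open>p\<close> and \<open>q\<close> at the indices 0 and 1.\<close>

lemma prime_filter_of_good_colouring:
  assumes col: "\<And>N. 2 \<le> N \<Longrightarrow> good_colouring \<alpha> \<beta> A le E N col"
    and E: "\<forall>i. E i \<in> A" "\<forall>x\<in>A. E (x + 2) = x"
  shows "prime_filter \<alpha> \<beta> A le {x \<in> A. col (x + 2)}"
proof -
  have index: "(\<lambda>s. s + 2) ` S \<subseteq> {..<Max (insert m S) + 3} \<and> m + 2 < Max (insert m S) + 3"
    if "finite S" for S :: "nat set" and m
    using that by (auto simp: less_Suc_eq_le)
  have shift: "E ` (\<lambda>s. s + 2) ` S = S" "card ((\<lambda>s. s + 2) ` S) = card S" if "S \<subseteq> A" for S
  proof -
    have "(\<lambda>s. E (s + 2)) ` S = (\<lambda>s. s) ` S"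
      using that E(2) by (intro image_cong) auto
    then show "E ` (\<lambda>s. s + 2) ` S = S"
      by (simp add: image_image)
    show "card ((\<lambda>s. s + 2) ` S) = card S"
      by (simp add: card_image inj_on_def)
  qed
  show ?thesis
    unfolding prime_filter_def
  proof (intro conjI allI impI ballI)
    fix x y assume x: "x \<in> {x \<in> A. col (x + 2)}" and "y \<in> A" "le x y"
    then have "le (E (x + 2)) (E (y + 2))"
      using E(2) by simp
    then have "col (y + 2)"
      using good_colouringD(3)[OF col[of "x + y + 3"], of "x + 2" "y + 2"] x by simp
    then show "y \<in> {x \<in> A. col (x + 2)}"
      using \<open>y \<in> A\<close> by simp
  next
    fix S m assume S: "S \<subseteq> {x \<in> A. col (x + 2)}" "card_less S \<alpha>" and meet: "is_meet A le S m"
    have "S \<subseteq> A" "m \<in> A" "finite S" "\<forall>s\<in>S. col (s + 2)"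
      using S meet by (auto simp: is_meet_def card_less_def)
    then have "col (m + 2)"
      using good_colouringD(4)[OF col[of "Max (insert m S) + 3"], of "(\<lambda>s. s + 2) ` S" "m + 2"]
        index[of S m] shift[of S] S meet E(2) by (simp add: card_less_def)
    then show "m \<in> {x \<in> A. col (x + 2)}"
      using \<open>m \<in> A\<close> by simp
  next
    fix T m assume T: "T \<subseteq> A" "card_less T \<beta>" and join: "is_join A le T m"
      and m: "m \<in> {x \<in> A. col (x + 2)}"
    have "finite T"
      using T(2) by (simp add: card_less_def)
    then have "\<exists>t\<in>(\<lambda>s. s + 2) ` T. col t"
      using good_colouringD(5)[OF col[of "Max (insert m T) + 3"], of "(\<lambda>s. s + 2) ` T" "m + 2"]
        index[of T m] shift[OF T(1)] T join m E(2) by (simp add: card_less_def)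
    then show "\<exists>t\<in>T. t \<in> {x \<in> A. col (x + 2)}"
      using T(1) by auto
  qed auto
qed

lemma separated_if_good_colourings:
  fixes A :: "nat set"
  assumes refl: "\<forall>x\<in>A. le x x"
    and good: "\<forall>N\<ge>2. \<forall>e. (\<forall>i. e i \<in> A) \<longrightarrow> \<not> le (e 0) (e 1) \<longrightarrow> (\<exists>col. good_colouring \<alpha> \<beta> A le e N col)"
  shows "separated_by_prime_filters \<alpha> \<beta> A le"
  unfolding separated_by_prime_filters_def
proof (intro ballI impI)
  fix p q assume p: "p \<in> A" and q: "q \<in> A" and "\<not> le p q"
  define E where
    "E i = (if i = 0 then p else if i = 1 then q else if i - 2 \<in> A then i - 2 else p)" for i
  have E: "\<forall>i. E i \<in> A" "\<forall>x\<in>A. E (x + 2) = x" "E 0 = p" "E 1 = q"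
    using p q by (simp_all add: E_def)
  have "\<exists>col. good_colouring \<alpha> \<beta> A le E N col" for N
  proof -
    have "\<exists>col. good_colouring \<alpha> \<beta> A le E (max N 2) col"
      using good[rule_format, of "max N 2" E] E(1,3,4) \<open>\<not> le p q\<close> by simp
    then obtain col where "good_colouring \<alpha> \<beta> A le E (max N 2) col" ..
    then have "good_colouring \<alpha> \<beta> A le E N col"
      by (rule good_colouring_mono) simp
    then show ?thesis
      by blast
  qed
  then obtain col where col: "\<And>N. 2 \<le> N \<Longrightarrow> good_colouring \<alpha> \<beta> A le E N col"
    using good_colouring_limit by blast
  have col_eq: "col i \<longleftrightarrow> col j" if "E i = E j" for i j
  proof -
    have ij: "i < i + j + 2" "j < i + j + 2"
      by simp_all
    have G: "good_colouring \<alpha> \<beta> A le E (i + j + 2) col"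
      by (rule col) simp
    have "le (E i) (E j)" "le (E j) (E i)"
      using refl E(1) \<open>E i = E j\<close> by simp_all
    then show ?thesis
      using good_colouringD(3)[OF G ij] good_colouringD(3)[OF G ij(2,1)] by blast
  qed
  have "E 0 = E (p + 2)" "E 1 = E (q + 2)"
    using E p q by simp_all
  moreover have "col 0" "\<not> col 1"
    using good_colouringD(1,2)[OF col[of 2]] by simp_all
  ultimately have "col (p + 2)" "\<not> col (q + 2)"
    using col_eq by blast+
  then show "\<exists>F. prime_filter \<alpha> \<beta> A le F \<and> p \<in> F \<and> q \<notin> F"
    using prime_filter_of_good_colouring[OF col E(1,2)] p q
    by (intro exI[of _ "{x \<in> A. col (x + 2)}"]) simp
qed

theorem proposition6p4:
  fixes \<alpha> \<beta> :: enat
  assumes "2 \<le> \<alpha>" and "2 \<le> \<beta>"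
  shows "\<exists>\<Theta>. (\<forall>\<phi>\<in>\<Theta>. sentence \<phi>) \<and> recursive_fmset \<Theta> \<and>
           (\<forall>(A :: nat set) le. countable A \<and> poset_on A le \<longrightarrow>
              (models A le \<Theta> \<longleftrightarrow> representable \<alpha> \<beta> A le))"
proof (intro exI conjI allI impI)
  show "\<forall>\<phi>\<in>range (rep_axiom \<alpha> \<beta>). sentence \<phi>"
    using sentence_rep_axiom by blast
  show "recursive_fmset (range (rep_axiom \<alpha> \<beta>))"
    by (rule recursive_rep_axioms)
  fix A :: "nat set" and le
  assume "countable A \<and> poset_on A le"
  then have refl: "\<forall>x\<in>A. le x x"
    by (simp add: poset_on_def)
  show "models A le (range (rep_axiom \<alpha> \<beta>)) \<longleftrightarrow> representable \<alpha> \<beta> A le"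
  proof
    assume "models A le (range (rep_axiom \<alpha> \<beta>))"
    then show "representable \<alpha> \<beta> A le"
      unfolding models_rep_axioms_iff representable_iff_separated_by_prime_filters
      by (rule separated_if_good_colourings[where A = A and le = le, OF refl])
  next
    assume "representable \<alpha> \<beta> A le"
    then have "separated_by_prime_filters \<alpha> \<beta> A le"
      by (simp add: representable_iff_separated_by_prime_filters)
    then show "models A le (range (rep_axiom \<alpha> \<beta>))"
      unfolding models_rep_axioms_iff by (intro allI impI) (rule good_colourings_if_separated)
  qed
qed

end
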